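(* Consider the linear probing filter (defined in the context) with table size $t$ a power of two, built by inserting the keys of a set $S\subseteq[u]$ with $|S|=n\le\frac23 t$ in some order. Assume that $h$ and $s$ are independent, that $h:[u]\to[t]$ is 5-independent, and that $s:[u]\to[2^b]$ is universal. Then for any given key $q\in[u]\setminus S$, the probability that the filter answers ``yes'' on $q$ (a false positive) is at most $C/2^b$ for an absolute constant $C$.
   Context: Let $[s]=\{0,\dots,s-1\}$. A random hash function $h:[u]\to[t]$ is 5-independent if for any distinct $x_0,\dots,x_4\in[u]$ and any $y_0,\dots,y_4\in[t]$, $\Pr[h(x_i)=y_i\ \forall i]=1/t^5$. A random function $s:[u]\to[2^b]$ is universal if $\Pr[s(x)=s(y)]\le 1/2^b$ for all distinct $x,y\in[u]$; $s(x)$ is called the signature of $x$. Linear probing filter: an array $T$ of positions (indexed by nonnegative integers, wrap-around ignored), each either empty or holding a signature. To query $q$: scan positions $h(q),h(q)+1,\dots$ until the first empty position; answer ``yes'' if $s(q)$ is found among the scanned signatures, else ``no''. To insert $q$: if a query for $q$ answers ``yes'', do nothing; otherwise place $s(q)$ in the first empty position at or after $h(q)$. The filter starts empty and the keys of $S$ are inserted one by one. *)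

theory Defs
  imports "HOL-Probability.Probability"
begin

text \<open>Linear probing filter. The table maps positions (naturals, no wrap-around)
  to an optional signature. Keys and signatures are naturals.\<close>

type_synonym lp_table = "nat \<Rightarrow> nat option"

definition first_empty :: "lp_table \<Rightarrow> nat \<Rightarrow> nat" where
  "first_empty T p = (LEAST j. p \<le> j \<and> T j = None)"

definition lp_query :: "(nat \<Rightarrow> nat) \<Rightarrow> (nat \<Rightarrow> nat) \<Rightarrow> lp_table \<Rightarrow> nat \<Rightarrow> bool" where
  "lp_query h s T q = (\<exists>j. h q \<le> j \<and> j < first_empty T (h q) \<and> T j = Some (s q))"

definition lp_insert :: "(nat \<Rightarrow> nat) \<Rightarrow> (nat \<Rightarrow> nat) \<Rightarrow> lp_table \<Rightarrow> nat \<Rightarrow> lp_table" where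
  "lp_insert h s T q =
     (if lp_query h s T q then T else T(first_empty T (h q) := Some (s q)))"

definition lp_build :: "(nat \<Rightarrow> nat) \<Rightarrow> (nat \<Rightarrow> nat) \<Rightarrow> nat list \<Rightarrow> lp_table" where
  "lp_build h s xs = foldl (lp_insert h s) (\<lambda>_. None) xs"

definition five_independent :: "(nat \<Rightarrow> nat) pmf \<Rightarrow> nat \<Rightarrow> nat \<Rightarrow> bool" where
  "five_independent H u t =
     ((\<forall>h\<in>set_pmf H. \<forall>x<u. h x < t) \<and>
      (\<forall>xs ys. length xs = 5 \<and> length ys = 5 \<and> distinct xs \<and> set xs \<subseteq> {..<u}
          \<and> set ys \<subseteq> {..<t} \<longrightarrow>
          measure_pmf.prob H {h. \<forall>i<5. h (xs ! i) = ys ! i} = 1 / real t ^ 5))"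

definition universal_sig :: "(nat \<Rightarrow> nat) pmf \<Rightarrow> nat \<Rightarrow> nat \<Rightarrow> bool" where
  "universal_sig \<Sigma> u b =
     ((\<forall>s\<in>set_pmf \<Sigma>. \<forall>x<u. s x < 2 ^ b) \<and>
      (\<forall>x y. x < u \<and> y < u \<and> x \<noteq> y \<longrightarrow>
          measure_pmf.prob \<Sigma> {s. s x = s y} \<le> 1 / 2 ^ b))"

end

theory Submission
  imports Defs
begin

text \<open>If the filter answers yes on \<open>q\<close>, the cell holding the matching signature belongs to
  a run of occupied cells that also contains \<open>h q\<close>; the keys stored in that run hash into it, so
  some key \<open>x \<in> S\<close> with \<open>s x = s q\<close> shares with \<open>q\<close> an interval \<open>[a, b]\<close> of positions into
  which at least \<open>b - a + 1\<close> keys hash. Since \<open>h\<close> and \<open>s\<close> are independent and \<open>s\<close> is universal,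
  the false positive probability is at most \<open>2 ^ -b\<close> times the expected number of keys sharing
  such a full interval with \<open>q\<close>.

  A full interval of length \<open>L \<in> [16 m, 32 m)\<close>, \<open>m = 2 ^ l\<close>, around \<open>h q\<close> forces one of the
  aligned blocks of \<open>m\<close> positions near \<open>h q\<close> to receive at least \<open>8 m / 9\<close> keys, whereas the
  load factor \<open>2 / 3\<close> makes its expected load at most \<open>2 m / 3\<close>. Conditioned on \<open>h q\<close>, the other
  keys are still 4-independent, so a fourth moment bound gives this event probability
  \<open>O(m\<^sup>-\<^sup>2)\<close>, while it accounts for only \<open>O(m)\<close> keys; summing over \<open>l\<close> gives a constant.\<close>

definition keys_in :: "(nat \<Rightarrow> nat) \<Rightarrow> nat set \<Rightarrow> nat \<Rightarrow> nat \<Rightarrow> nat set" where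
  "keys_in h S a b = {y\<in>S. a \<le> h y \<and> h y \<le> b}"

definition full_interval :: "(nat \<Rightarrow> nat) \<Rightarrow> nat set \<Rightarrow> nat \<Rightarrow> nat \<Rightarrow> bool" where
  "full_interval h S a b \<longleftrightarrow> a \<le> b \<and> b + 1 - a \<le> card (keys_in h S a b)"

definition shares_full_interval :: "(nat \<Rightarrow> nat) \<Rightarrow> nat set \<Rightarrow> nat \<Rightarrow> nat \<Rightarrow> bool" where
  "shares_full_interval h S q x \<longleftrightarrow>
     (\<exists>a b. a \<le> h x \<and> h x \<le> b \<and> a \<le> h q \<and> h q \<le> b \<and> full_interval h S a b)"

lemma first_empty_spec:
  assumes "finite {j. T j \<noteq> None}"
  shows "p \<le> first_empty T p \<and> T (first_empty T p) = None \<and>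
         (\<forall>i. p \<le> i \<and> i < first_empty T p \<longrightarrow> T i \<noteq> None)"
proof -
  have "\<not> {p..} \<subseteq> {j. T j \<noteq> None}"
    using assms finite_subset infinite_Ici by blast
  then obtain j where j: "p \<le> j \<and> T j = None" by (auto simp: subset_iff)
  show ?thesis unfolding first_empty_def
    using LeastI[of "\<lambda>j. p \<le> j \<and> T j = None", OF j]
      not_less_Least[of _ "\<lambda>j. p \<le> j \<and> T j = None"]
    by auto
qed

text \<open>The proof follows the filter together with a second table \<open>K\<close> recording which key
  owns each occupied cell.\<close>

fun lp_insert_owner :: "(nat \<Rightarrow> nat) \<Rightarrow> (nat \<Rightarrow> nat) \<Rightarrow> lp_table \<times> (nat \<Rightarrow> nat option) \<Rightarrow> nat
    \<Rightarrow> lp_table \<times> (nat \<Rightarrow> nat option)" where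
  "lp_insert_owner h s (T, K) x =
     (if lp_query h s T x then (T, K)
      else (T(first_empty T (h x) := Some (s x)), K(first_empty T (h x) := Some x)))"

definition lp_build_owner :: "(nat \<Rightarrow> nat) \<Rightarrow> (nat \<Rightarrow> nat) \<Rightarrow> nat list
    \<Rightarrow> lp_table \<times> (nat \<Rightarrow> nat option)" where
  "lp_build_owner h s xs = foldl (lp_insert_owner h s) (\<lambda>_. None, \<lambda>_. None) xs"

lemma fst_lp_insert_owner: "fst (lp_insert_owner h s TK x) = lp_insert h s (fst TK) x"
  by (cases TK) (simp add: lp_insert_def)

lemma fst_lp_build_owner: "fst (lp_build_owner h s xs) = lp_build h s xs"
  by (induction xs rule: rev_induct)
     (simp_all add: lp_build_owner_def lp_build_def fst_lp_insert_owner)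

definition owner_invariant :: "(nat \<Rightarrow> nat) \<Rightarrow> (nat \<Rightarrow> nat) \<Rightarrow> nat set \<Rightarrow> lp_table
    \<Rightarrow> (nat \<Rightarrow> nat option) \<Rightarrow> bool" where
  "owner_invariant h s D T K \<longleftrightarrow>
     (\<forall>j. T j = map_option s (K j)) \<and>
     (\<forall>j x. K j = Some x \<longrightarrow> x \<in> D \<and> h x \<le> j \<and> (\<forall>i. h x \<le> i \<and> i \<le> j \<longrightarrow> T i \<noteq> None)) \<and>
     (\<forall>i j x. K i = Some x \<and> K j = Some x \<longrightarrow> i = j) \<and>
     finite {j. T j \<noteq> None}"

lemma owner_invariant_insert:
  assumes inv: "owner_invariant h s D T K" and "x \<notin> D"
    and step: "lp_insert_owner h s (T, K) x = (T', K')"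
  shows "owner_invariant h s (insert x D) T' K'"
proof (cases "lp_query h s T x")
  case True
  then show ?thesis using inv step unfolding owner_invariant_def by auto
next
  case False
  define f where "f = first_empty T (h x)"
  have fin: "finite {j. T j \<noteq> None}" using inv unfolding owner_invariant_def by blast
  have f: "h x \<le> f" "T f = None" "\<forall>i. h x \<le> i \<and> i < f \<longrightarrow> T i \<noteq> None"
    using first_empty_spec[OF fin, of "h x"] unfolding f_def by auto
  have T': "T' = T(f := Some (s x))" and K': "K' = K(f := Some x)"
    using False step by (simp_all add: f_def)
  have no_x: "K j \<noteq> Some x" for j using inv \<open>x \<notin> D\<close> unfolding owner_invariant_def by blast
  have "finite {j. T' j \<noteq> None}"
    by (rule finite_subset[of _ "insert f {j. T j \<noteq> None}"]) (use fin T' in auto)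
  moreover have "\<forall>j. T' j = map_option s (K' j)" using inv T' K' by (auto simp: owner_invariant_def)
  moreover have "\<forall>j y. K' j = Some y \<longrightarrow> y \<in> insert x D \<and> h y \<le> j \<and>
      (\<forall>i. h y \<le> i \<and> i \<le> j \<longrightarrow> T' i \<noteq> None)"
    using inv f unfolding owner_invariant_def T' K' by (auto simp: le_less)
  moreover have "\<forall>i j y. K' i = Some y \<and> K' j = Some y \<longrightarrow> i = j"
    using inv no_x unfolding owner_invariant_def K' by (metis fun_upd_apply)
  ultimately show ?thesis unfolding owner_invariant_def by blast
qed

lemma owner_invariant_lp_build_owner:
  "distinct xs \<Longrightarrow> lp_build_owner h s xs = (T, K) \<Longrightarrow> owner_invariant h s (set xs) T K"
proof (induction xs arbitrary: T K rule: rev_induct)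
  case Nil
  then show ?case by (auto simp: lp_build_owner_def owner_invariant_def)
next
  case (snoc x xs)
  obtain T0 K0 where TK0: "lp_build_owner h s xs = (T0, K0)" by fastforce
  then have "owner_invariant h s (set xs) T0 K0" using snoc by simp
  moreover have "lp_insert_owner h s (T0, K0) x = (T, K)"
    using snoc.prems(2) TK0 by (simp add: lp_build_owner_def)
  ultimately show ?case using snoc.prems(1) owner_invariant_insert by fastforce
qed

text \<open>A maximal run of occupied cells is a full interval, since its owners are distinct keys
  hashing into it.\<close>

lemma occupied_run_full_interval:
  assumes inv: "owner_invariant h s D T K" and "finite D" and "a \<le> j"
    and occupied: "\<And>i. a \<le> i \<Longrightarrow> i \<le> j \<Longrightarrow> T i \<noteq> None"
    and run_start: "0 < a \<Longrightarrow> T (a - 1) = None"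
  shows "full_interval h D a j"
proof -
  have owner: "K i = Some (the (K i))" if "a \<le> i" "i \<le> j" for i
    using inv occupied[OF that] unfolding owner_invariant_def by (metis option.collapse option.map_disc_iff)
  have "(\<lambda>i. the (K i)) ` {a..j} \<subseteq> keys_in h D a j"
  proof
    fix y assume "y \<in> (\<lambda>i. the (K i)) ` {a..j}"
    then obtain i where i: "a \<le> i" "i \<le> j" "K i = Some y" using owner by fastforce
    then have y: "y \<in> D" "h y \<le> i" "\<forall>k. h y \<le> k \<and> k \<le> i \<longrightarrow> T k \<noteq> None"
      using inv unfolding owner_invariant_def by blast+
    have "a \<le> h y"
    proof (rule ccontr)
      assume "\<not> a \<le> h y"
      then have "0 < a" "h y \<le> a - 1" "a - 1 \<le> i" using i by auto
      then show False using y(3) run_start by blast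
    qed
    then show "y \<in> keys_in h D a j" using y i unfolding keys_in_def by auto
  qed
  moreover have "inj_on (\<lambda>i. the (K i)) {a..j}"
  proof (rule inj_onI)
    fix i i' assume "i \<in> {a..j}" "i' \<in> {a..j}" "the (K i) = the (K i')"
    then have "K i = Some (the (K i))" "K i' = Some (the (K i))" using owner by (metis atLeastAtMost_iff)+
    then show "i = i'" using inv unfolding owner_invariant_def by blast
  qed
  moreover have "finite (keys_in h D a j)" using \<open>finite D\<close> by (simp add: keys_in_def)
  ultimately have "card {a..j} \<le> card (keys_in h D a j)" by (metis card_inj_on_le)
  then show ?thesis unfolding full_interval_def using \<open>a \<le> j\<close> by simp
qed

lemma lp_query_imp_shares_full_interval:
  assumes inv: "owner_invariant h s D T K" and "finite D" and "lp_query h s T q"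
  shows "\<exists>x\<in>D. s x = s q \<and> shares_full_interval h D q x"
proof -
  have fin: "finite {j. T j \<noteq> None}" using inv unfolding owner_invariant_def by blast
  obtain j where j: "h q \<le> j" "j < first_empty T (h q)" "T j = Some (s q)"
    using \<open>lp_query h s T q\<close> unfolding lp_query_def by blast
  then obtain x where x: "K j = Some x" "s x = s q"
    using inv unfolding owner_invariant_def by (metis map_option_eq_Some)
  then have x_run: "x \<in> D" "h x \<le> j" "\<forall>i. h x \<le> i \<and> i \<le> j \<longrightarrow> T i \<noteq> None"
    using inv unfolding owner_invariant_def by blast+
  have q_run: "\<forall>i. h q \<le> i \<and> i \<le> j \<longrightarrow> T i \<noteq> None"
    using first_empty_spec[OF fin, of "h q"] j by auto
  define run where "run a \<longleftrightarrow> (\<forall>i. a \<le> i \<and> i \<le> j \<longrightarrow> T i \<noteq> None)" for a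
  define a where "a = (LEAST a. run a)"
  have "run a" unfolding a_def by (rule LeastI[of run "h x"]) (use x_run run_def in auto)
  moreover have "a \<le> h x" "a \<le> h q"
    unfolding a_def using x_run q_run run_def by (auto intro: Least_le)
  moreover have "T (a - 1) = None" if "0 < a"
  proof (rule ccontr)
    assume "T (a - 1) \<noteq> None"
    then have "run (a - 1)" using \<open>run a\<close> \<open>0 < a\<close> unfolding run_def
      by (metis Suc_pred' le_antisym not_less_eq_eq)
    then have "a \<le> a - 1" unfolding a_def by (rule Least_le)
    with \<open>0 < a\<close> show False by simp
  qed
  ultimately have "full_interval h D a j"
    using occupied_run_full_interval[OF inv \<open>finite D\<close>] x_run unfolding run_def by force
  then show ?thesis using x x_run j \<open>a \<le> h x\<close> \<open>a \<le> h q\<close>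
    unfolding shares_full_interval_def by blast
qed

lemma lp_query_lp_build_imp_shares_full_interval:
  assumes "distinct xs" and "lp_query h s (lp_build h s xs) q"
  shows "\<exists>x\<in>set xs. s x = s q \<and> shares_full_interval h (set xs) q x"
proof -
  obtain T K where TK: "lp_build_owner h s xs = (T, K)" by fastforce
  then have "T = lp_build h s xs" using fst_lp_build_owner[of h s xs] by simp
  then show ?thesis
    using lp_query_imp_shares_full_interval owner_invariant_lp_build_owner[OF assms(1) TK] assms(2)
    by blast
qed

text \<open>Block \<open>j\<close> at scale \<open>m\<close> consists of the positions \<open>[j m, j m + m)\<close>.\<close>

definition dense_block_near :: "(nat \<Rightarrow> nat) \<Rightarrow> nat set \<Rightarrow> nat \<Rightarrow> nat \<Rightarrow> bool" where
  "dense_block_near h S q m \<longleftrightarrow>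
     (\<exists>j. h q div m \<le> j + 32 \<and> j \<le> h q div m + 32 \<and> 8 * m \<le> 9 * card {y\<in>S. h y div m = j})"

lemma div_eq_imp_block_bounds:
  fixes y m :: nat
  assumes "y div m = j" "0 < m"
  shows "j * m \<le> y \<and> y < j * m + m"
proof -
  have "y = j * m + y mod m" using div_mult_mod_eq[of y m] assms(1) by simp
  then show ?thesis using mod_less_divisor[OF assms(2), of y] by linarith
qed

lemma card_blocks_meeting_interval:
  fixes a b m :: nat
  assumes "0 < m" "a \<le> b"
  shows "m * card {a div m..b div m} < b + 1 - a + 2 * m"
proof -
  have "a div m \<le> b div m" using assms by (simp add: div_le_mono)
  then have "m * card {a div m..b div m} = m * (b div m) + m - m * (a div m)"
    by (simp add: diff_mult_distrib2 algebra_simps)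
  moreover have "m * (b div m) \<le> b" by simp
  moreover have "a < m * (a div m) + m"
    using div_eq_imp_block_bounds[of a m] assms(1) by (simp add: mult.commute)
  ultimately show ?thesis using assms by linarith
qed

text \<open>Fewer than \<open>9 L / (8 m)\<close> blocks meet an interval of length at most \<open>L\<close>, so one of
  them receives at least \<open>8 m / 9\<close> of the \<open>L\<close> keys hashing into it.\<close>

lemma full_interval_dense_block_near:
  assumes "finite S" and "0 < m" and full: "full_interval h S a b" and "a \<le> h q" and "h q \<le> b"
    and "16 * m \<le> card (keys_in h S a b)" and "card (keys_in h S a b) < 32 * m"
  shows "dense_block_near h S q m"
proof (rule ccontr)
  assume sparse: "\<not> dense_block_near h S q m"
  define L where "L = card (keys_in h S a b)"
  define R where "R = {a div m .. b div m}"
  define Y where "Y j = {y\<in>S. h y div m = j}" for j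
  have "a \<le> b" "b + 1 - a \<le> L" using full unfolding full_interval_def L_def by auto
  have "keys_in h S a b \<subseteq> (\<Union>j\<in>R. Y j)"
    unfolding keys_in_def R_def Y_def by (auto intro: div_le_mono)
  then have "L \<le> card (\<Union>j\<in>R. Y j)"
    unfolding L_def by (rule card_mono[rotated]) (auto simp: Y_def R_def \<open>finite S\<close>)
  also have "\<dots> \<le> (\<Sum>j\<in>R. card (Y j))" by (rule card_UN_le) (simp add: R_def)
  finally have "9 * L \<le> (\<Sum>j\<in>R. 9 * card (Y j))" by (simp add: sum_distrib_left[symmetric])
  also have "\<dots> \<le> (\<Sum>j\<in>R. 8 * m - 1)"
  proof (rule sum_mono)
    fix j assume "j \<in> R"
    have "b < a + 32 * m" using \<open>b + 1 - a \<le> L\<close> \<open>a \<le> b\<close> assms(7) unfolding L_def by linarith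
    then have "h q div m \<le> (a + 32 * m) div m" "b div m \<le> (h q + 32 * m) div m"
      using assms(4,5) by (intro div_le_mono; linarith)+
    then have "h q div m \<le> j + 32 \<and> j \<le> h q div m + 32"
      using \<open>j \<in> R\<close> \<open>0 < m\<close> by (auto simp: R_def)
    then have "\<not> 8 * m \<le> 9 * card (Y j)" using sparse unfolding dense_block_near_def Y_def by blast
    then show "9 * card (Y j) \<le> 8 * m - 1" by linarith
  qed
  also have "\<dots> \<le> card R * (8 * m)" by simp
  also have "\<dots> < 9 * L"
  proof -
    have "m * card R < L + 2 * m"
      using card_blocks_meeting_interval[OF \<open>0 < m\<close> \<open>a \<le> b\<close>] \<open>b + 1 - a \<le> L\<close> unfolding R_def
      by linarith
    then show ?thesis using assms(6) unfolding L_def by (simp add: algebra_simps)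
  qed
  finally show False by simp
qed

lemma finite_full_intervals_containing:
  assumes "finite S"
  shows "finite {(a, b). full_interval h S a b \<and> a \<le> p \<and> p \<le> b}"
proof (rule finite_subset)
  show "{(a, b). full_interval h S a b \<and> a \<le> p \<and> p \<le> b} \<subseteq> {..p} \<times> {..p + card S}"
  proof
    fix ab assume "ab \<in> {(a, b). full_interval h S a b \<and> a \<le> p \<and> p \<le> b}"
    then obtain a b where "ab = (a, b)" "full_interval h S a b" "a \<le> p" "p \<le> b" by auto
    moreover have "card (keys_in h S a b) \<le> card S" using assms by (simp add: keys_in_def card_mono)
    ultimately show "ab \<in> {..p} \<times> {..p + card S}" unfolding full_interval_def by auto
  qed
qed simp

text \<open>Every full interval containing \<open>h q\<close> lies in the union of the one reaching furthest
  to the left and the one reaching furthest to the right.\<close>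

lemma shares_full_interval_within_full_interval:
  assumes "finite S" and "\<exists>x\<in>S. shares_full_interval h S q x"
  obtains a b where "full_interval h S a b" "a \<le> h q" "h q \<le> b"
    "card {x\<in>S. shares_full_interval h S q x} \<le> 2 * card (keys_in h S a b)"
proof -
  define FI where "FI = {(a, b). full_interval h S a b \<and> a \<le> h q \<and> h q \<le> b}"
  have "finite FI" unfolding FI_def by (rule finite_full_intervals_containing[OF assms(1)])
  moreover have "FI \<noteq> {}" using assms(2) unfolding shares_full_interval_def FI_def by auto
  ultimately have "Min (fst ` FI) \<in> fst ` FI" "Max (snd ` FI) \<in> snd ` FI"
    by (intro Min_in Max_in; simp)+
  then obtain a1 b1 a2 b2 where left: "(a1, b1) \<in> FI" "a1 = Min (fst ` FI)"
    and right: "(a2, b2) \<in> FI" "b2 = Max (snd ` FI)"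
    by force
  have "{x\<in>S. shares_full_interval h S q x} \<subseteq> keys_in h S a1 b1 \<union> keys_in h S a2 b2" (is "_ \<subseteq> ?U")
  proof
    fix x assume "x \<in> {x\<in>S. shares_full_interval h S q x}"
    then obtain a b where x: "x \<in> S" "a \<le> h x" "h x \<le> b" and ab: "(a, b) \<in> FI"
      unfolding shares_full_interval_def FI_def by auto
    have "a1 \<le> a" "b \<le> b2"
      using \<open>finite FI\<close> ab left(2) right(2) by (metis Min_le Max_ge finite_imageI fst_conv snd_conv image_eqI)+
    moreover have "h q \<le> b1" "a2 \<le> h q" using left(1) right(1) unfolding FI_def by auto
    ultimately show "x \<in> keys_in h S a1 b1 \<union> keys_in h S a2 b2"
      using x unfolding keys_in_def by auto
  qed
  then have "card {x\<in>S. shares_full_interval h S q x} \<le> card ?U"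
    by (rule card_mono[rotated]) (simp add: keys_in_def \<open>finite S\<close>)
  also have "\<dots> \<le> card (keys_in h S a1 b1) + card (keys_in h S a2 b2)" by (rule card_Un_le)
  finally have N: "card {x\<in>S. shares_full_interval h S q x}
      \<le> card (keys_in h S a1 b1) + card (keys_in h S a2 b2)" .
  show thesis
  proof (cases "card (keys_in h S a1 b1) \<le> card (keys_in h S a2 b2)")
    case True
    then show thesis using that[of a2 b2] right(1) N unfolding FI_def by simp
  next
    case False
    then show thesis using that[of a1 b1] left(1) N unfolding FI_def by simp
  qed
qed

lemma full_interval_dense_block_near_scale:
  assumes "finite S" and "full_interval h S a b" and "a \<le> h q" and "h q \<le> b"
    and "16 \<le> card (keys_in h S a b)"
  obtains l where "l < card S" "card (keys_in h S a b) < 32 * 2 ^ l" "dense_block_near h S q (2 ^ l)"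
proof -
  define c where "c = card (keys_in h S a b)"
  obtain l :: nat where "2 ^ l \<le> c div 16" "c div 16 < 2 ^ (l + 1)"
    using ex_power_ivl1[of 2 "c div 16"] assms(5) unfolding c_def by force
  then have c_l: "16 * 2 ^ l \<le> c" "c < 32 * 2 ^ l" by simp_all
  have "c \<le> card S" unfolding c_def keys_in_def using assms(1) by (simp add: card_mono)
  then have "l < card S" using c_l less_exp[of l] by linarith
  moreover have "dense_block_near h S q (2 ^ l)"
    using full_interval_dense_block_near[OF assms(1) _ assms(2-4)] c_l unfolding c_def by simp
  ultimately show thesis using that c_l(2) unfolding c_def by simp
qed

lemma card_shares_full_interval_le:
  assumes "finite S"
  shows "real (card {x\<in>S. shares_full_interval h S q x})
     \<le> 32 + (\<Sum>l<card S. 64 * 2 ^ l * of_bool (dense_block_near h S q (2 ^ l)))"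
    (is "_ \<le> 32 + ?sum")
proof -
  have "0 \<le> ?sum" by (intro sum_nonneg) auto
  show ?thesis
  proof (cases "\<exists>x\<in>S. shares_full_interval h S q x")
    case False
    then have none: "{x\<in>S. shares_full_interval h S q x} = {}" by auto
    show ?thesis unfolding none using \<open>0 \<le> ?sum\<close> by simp
  next
    case True
    then obtain a b where ab: "full_interval h S a b" "a \<le> h q" "h q \<le> b"
      and N: "card {x\<in>S. shares_full_interval h S q x} \<le> 2 * card (keys_in h S a b)"
      using shares_full_interval_within_full_interval[OF assms] by blast
    show ?thesis
    proof (cases "card (keys_in h S a b) < 16")
      case True
      then show ?thesis using N \<open>0 \<le> ?sum\<close> by linarith
    next
      case False
      then have "16 \<le> card (keys_in h S a b)" by simp
      then obtain l where l: "l < card S" "card (keys_in h S a b) < 32 * 2 ^ l"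
        and "dense_block_near h S q (2 ^ l)"
        by (rule full_interval_dense_block_near_scale[OF assms ab])
      then have "64 * 2 ^ l \<le> ?sum"
        using member_le_sum[of l "{..<card S}"
            "\<lambda>l. 64 * 2 ^ l * of_bool (dense_block_near h S q (2 ^ l)) :: real"]
        by simp
      moreover have "card {x\<in>S. shares_full_interval h S q x} \<le> 64 * 2 ^ l" using N l by linarith
      then have "real (card {x\<in>S. shares_full_interval h S q x}) \<le> real (64 * 2 ^ l)"
        by (simp only: of_nat_le_iff)
      ultimately show ?thesis by simp
    qed
  qed
qed

lemma integrable_measure_pmf_bounded:
  fixes f :: "'a \<Rightarrow> real"
  assumes "\<And>x. \<bar>f x\<bar> \<le> B"
  shows "integrable (measure_pmf M) f"
  using assms by (intro measure_pmf.integrable_const_bound[where B = B]) auto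

lemma measure_pmf_prob_cong_set_pmf:
  assumes "\<And>x. x \<in> set_pmf M \<Longrightarrow> x \<in> A \<longleftrightarrow> x \<in> B"
  shows "measure_pmf.prob M A = measure_pmf.prob M B"
proof -
  have "A \<inter> set_pmf M = B \<inter> set_pmf M" using assms by auto
  then show ?thesis by (metis measure_Int_set_pmf)
qed

lemma measure_pair_pmf_Times:
  "measure_pmf.prob (pair_pmf M N) (A \<times> B) = measure_pmf.prob M A * measure_pmf.prob N B"
proof -
  have "(A \<times> B) \<inter> set_pmf (pair_pmf M N) = (A \<inter> set_pmf M) \<times> (B \<inter> set_pmf N)" by auto
  then have "measure_pmf.prob (pair_pmf M N) (A \<times> B) =
      measure_pmf.prob (pair_pmf M N) ((A \<inter> set_pmf M) \<times> (B \<inter> set_pmf N))"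
    by (metis measure_Int_set_pmf)
  also have "\<dots> = measure_pmf.prob M (A \<inter> set_pmf M) * measure_pmf.prob N (B \<inter> set_pmf N)"
    by (rule measure_pmf_prob_product) (auto intro: countable_subset)
  finally show ?thesis by (simp add: measure_Int_set_pmf)
qed

lemma measure_pmf_prob_vimage_finite:
  assumes "finite W"
  shows "measure_pmf.prob M {x. f x \<in> W} = (\<Sum>w\<in>W. measure_pmf.prob M {x. f x = w})"
proof -
  have "measure_pmf.prob M {x. f x \<in> W} = measure_pmf.prob (map_pmf f M) W"
    by (simp add: vimage_def)
  also have "\<dots> = (\<Sum>w\<in>W. pmf (map_pmf f M) w)" by (rule measure_measure_pmf_finite[OF assms])
  finally show ?thesis by (simp add: pmf_map vimage_def)
qed

text \<open>With fewer than five keys, add a fresh key and sum over its hash value.\<close>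

lemma five_independent_prob_map:
  assumes indep: "five_independent H u t" and "5 \<le> u" and "0 < t"
    and "distinct ks" "length ks \<le> 5" "set ks \<subseteq> {..<u}" "length ys = length ks" "set ys \<subseteq> {..<t}"
  shows "measure_pmf.prob H {h. map h ks = ys} = 1 / real t ^ length ks"
  using assms(4-)
proof (induction "5 - length ks" arbitrary: ks ys)
  case 0
  then have "length ks = 5" by simp
  moreover have "{h. map h ks = ys} = {h. \<forall>i<5. h (ks ! i) = ys ! i}"
    using 0 \<open>length ks = 5\<close> by (auto simp: list_eq_iff_nth_eq)
  ultimately show ?case using indep 0 unfolding five_independent_def by simp
next
  case (Suc d)
  have "card (set ks) < card {..<u}" using Suc \<open>5 \<le> u\<close> distinct_card[of ks] by simp
  then have "\<not> {..<u} \<subseteq> set ks" by (meson card_mono List.finite_set not_le)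
  then obtain z where z: "z < u" "z \<notin> set ks" by auto
  define Ys where "Ys = (\<lambda>y. ys @ [y]) ` {..<t}"
  have range: "\<forall>x<u. h x < t" if "h \<in> set_pmf H" for h
    using indep that unfolding five_independent_def by blast
  have "measure_pmf.prob H {h. map h ks = ys} = measure_pmf.prob H {h. map h (ks @ [z]) \<in> Ys}"
    by (rule measure_pmf_prob_cong_set_pmf) (use range z in \<open>auto simp: Ys_def\<close>)
  also have "\<dots> = (\<Sum>w\<in>Ys. measure_pmf.prob H {h. map h (ks @ [z]) = w})"
    by (rule measure_pmf_prob_vimage_finite) (simp add: Ys_def)
  also have "\<dots> = (\<Sum>y<t. measure_pmf.prob H {h. map h (ks @ [z]) = ys @ [y]})"
    unfolding Ys_def by (subst sum.reindex) (auto simp: inj_on_def)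
  also have "\<dots> = (\<Sum>y<t. 1 / real t ^ length (ks @ [z]))"
  proof (rule sum.cong[OF refl])
    fix y assume "y \<in> {..<t}"
    then show "measure_pmf.prob H {h. map h (ks @ [z]) = ys @ [y]} = 1 / real t ^ length (ks @ [z])"
      using Suc.hyps(1)[of "ks @ [z]" "ys @ [y]"] Suc.hyps(2) Suc.prems z by auto
  qed
  also have "\<dots> = 1 / real t ^ length ks" using \<open>0 < t\<close> by simp
  finally show ?case .
qed

lemma five_independent_prob_point_hits:
  assumes indep: "five_independent H u t" and "5 \<le> u" and "0 < t"
    and "q < u" "distinct xs" "q \<notin> set xs" "set xs \<subseteq> {..<u}" "length xs \<le> 4" "p < t"
  shows "measure_pmf.prob H {h. h q = p \<and> (\<forall>x\<in>set xs. h x \<in> B)}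
     = real (card (B \<inter> {..<t})) ^ length xs / real t ^ Suc (length xs)"
proof -
  define B' where "B' = B \<inter> {..<t}"
  define W where "W = (\<lambda>zs. p # zs) ` {zs. set zs \<subseteq> B' \<and> length zs = length xs}"
  have "finite B'" by (simp add: B'_def)
  have range: "\<forall>x<u. h x < t" if "h \<in> set_pmf H" for h
    using indep that unfolding five_independent_def by blast
  have "measure_pmf.prob H {h. h q = p \<and> (\<forall>x\<in>set xs. h x \<in> B)} =
        measure_pmf.prob H {h. map h (q # xs) \<in> W}"
  proof (rule measure_pmf_prob_cong_set_pmf)
    fix h assume "h \<in> set_pmf H"
    then have "\<forall>x\<in>set xs. h x < t" using range \<open>set xs \<subseteq> {..<u}\<close> by auto
    then show "h \<in> {h. h q = p \<and> (\<forall>x\<in>set xs. h x \<in> B)} \<longleftrightarrow> h \<in> {h. map h (q # xs) \<in> W}"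
      by (auto simp: W_def B'_def intro!: image_eqI[where x = "map h xs"])
  qed
  also have "\<dots> = (\<Sum>w\<in>W. measure_pmf.prob H {h. map h (q # xs) = w})"
    by (rule measure_pmf_prob_vimage_finite) (simp add: W_def finite_lists_length_eq \<open>finite B'\<close>)
  also have "\<dots> = (\<Sum>w\<in>W. 1 / real t ^ Suc (length xs))"
  proof (rule sum.cong[OF refl])
    fix w assume "w \<in> W"
    then have "length w = length (q # xs)" "set w \<subseteq> {..<t}" using \<open>p < t\<close> by (auto simp: W_def B'_def)
    then show "measure_pmf.prob H {h. map h (q # xs) = w} = 1 / real t ^ Suc (length xs)"
      using five_independent_prob_map[OF indep \<open>5 \<le> u\<close> \<open>0 < t\<close>, of "q # xs" w] assms by auto
  qed
  also have "\<dots> = real (card W) / real t ^ Suc (length xs)" by simp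
  also have "card W = card B' ^ length xs"
    unfolding W_def by (subst card_image) (auto simp: card_lists_length_eq[OF \<open>finite B'\<close>])
  finally show ?thesis by (simp add: B'_def)
qed

fun falling_fact :: "real \<Rightarrow> nat \<Rightarrow> real" where
  "falling_fact x 0 = 1"
| "falling_fact x (Suc k) = falling_fact x k * (x - real k)"

lemma falling_fact_of_nat_eq_0: "n < k \<Longrightarrow> falling_fact (real n) k = 0"
  by (induction k) (auto simp: less_Suc_eq)

lemma falling_fact_of_nat_eq_prod: "k \<le> n \<Longrightarrow> falling_fact (real n) k = real (\<Prod>{n - k + 1..n})"
proof (induction k)
  case (Suc k)
  have "{n - Suc k + 1..n} = insert (n - k) {n - k + 1..n}" using Suc.prems by auto
  then show ?case using Suc by (simp add: of_nat_diff)
qed simp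

lemma abs_falling_fact_le: "\<bar>falling_fact x k\<bar> \<le> (\<bar>x\<bar> + real k) ^ k"
proof (induction k)
  case (Suc k)
  have "\<bar>falling_fact x (Suc k)\<bar> = \<bar>falling_fact x k\<bar> * \<bar>x - real k\<bar>" by (simp add: abs_mult)
  also have "\<dots> \<le> (\<bar>x\<bar> + real k) ^ k * (\<bar>x\<bar> + real (Suc k))"
    using Suc.IH by (intro mult_mono) auto
  also have "\<dots> \<le> (\<bar>x\<bar> + real (Suc k)) ^ k * (\<bar>x\<bar> + real (Suc k))"
    by (intro mult_right_mono power_mono) auto
  finally show ?case by (simp add: mult.commute)
qed simp

definition distinct_lists :: "'a set \<Rightarrow> nat \<Rightarrow> 'a list set" where
  "distinct_lists A k = {xs. length xs = k \<and> distinct xs \<and> set xs \<subseteq> A}"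

lemma finite_distinct_lists: "finite A \<Longrightarrow> finite (distinct_lists A k)"
  unfolding distinct_lists_def by (rule finite_subset[OF _ finite_lists_length_eq[of A k]]) auto

lemma card_distinct_lists:
  assumes "finite A"
  shows "real (card (distinct_lists A k)) = falling_fact (real (card A)) k"
proof (cases "k \<le> card A")
  case True
  then show ?thesis unfolding distinct_lists_def
    using card_lists_distinct_length_eq[OF assms True] falling_fact_of_nat_eq_prod by simp
next
  case False
  then have "distinct_lists A k = {}"
    unfolding distinct_lists_def using assms by (auto dest: card_mono simp: distinct_card)
  then show ?thesis using falling_fact_of_nat_eq_0 False by simp
qed

text \<open>\<open>central_moment4 F \<mu>\<close> is the fourth central moment of a random variable with mean \<open>\<mu>\<close>
  whose factorial moments \<open>E[X (X - 1) \<dots> (X - k + 1)]\<close> are \<open>F k\<close>.\<close>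

definition central_moment4 :: "(nat \<Rightarrow> real) \<Rightarrow> real \<Rightarrow> real" where
  "central_moment4 F \<mu> = F 4 + (6 - 4 * \<mu>) * F 3 + (7 - 12 * \<mu> + 6 * \<mu>^2) * F 2
     + (1 - 4 * \<mu> + 6 * \<mu>^2 - 4 * \<mu>^3) * F 1 + \<mu>^4 * F 0"

lemma central_moment4_cong:
  "(\<And>k. k \<le> 4 \<Longrightarrow> F k = G k) \<Longrightarrow> central_moment4 F \<mu> = central_moment4 G \<mu>"
  by (simp add: central_moment4_def)

lemma central_moment4_mult: "central_moment4 (\<lambda>k. c * F k) \<mu> = c * central_moment4 F \<mu>"
  by (simp add: central_moment4_def algebra_simps)

lemma power4_eq_central_moment4: "(x - \<mu>) ^ 4 = central_moment4 (falling_fact x) \<mu>"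
  by (simp add: central_moment4_def numeral_eq_Suc algebra_simps power2_eq_square power3_eq_cube
      power4_eq_xxxx)

lemma expectation_central_moment4:
  assumes "\<And>k. integrable (measure_pmf M) (F k)"
  shows "measure_pmf.expectation M (\<lambda>\<omega>. central_moment4 (\<lambda>k. F k \<omega>) \<mu>)
    = central_moment4 (\<lambda>k. measure_pmf.expectation M (F k)) \<mu>"
  using assms by (simp add: central_moment4_def Bochner_Integration.integrable_add)

text \<open>The binomial distribution with parameters \<open>n\<close> and \<open>\<pi>\<close> has factorial moments
  \<open>n (n - 1) \<dots> (n - k + 1) \<pi> ^ k\<close> and fourth central moment
  \<open>n \<pi> (1 - \<pi>) + 3 n (n - 2) (\<pi> (1 - \<pi>))\<^sup>2\<close>.\<close>

lemma binomial_central_moment4_le: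
  fixes n \<pi> :: real
  assumes "0 \<le> \<pi>" and "\<pi> \<le> 1" and "0 \<le> n"
  shows "central_moment4 (\<lambda>k. falling_fact n k * \<pi> ^ k) (n * \<pi>) \<le> n * \<pi> + 3 * (n * \<pi>)^2"
proof -
  define a where "a = \<pi> * (1 - \<pi>)"
  have "0 \<le> a" "a \<le> \<pi>" using assms unfolding a_def by (auto simp: mult_left_le)
  have "n * a \<le> n * \<pi>" using \<open>a \<le> \<pi>\<close> \<open>0 \<le> n\<close> by (simp add: mult_left_mono)
  moreover have "n * (n - 2) * a^2 \<le> (n * \<pi>)^2"
  proof (cases "2 \<le> n")
    case True
    have "n * (n - 2) \<le> n^2" using \<open>0 \<le> n\<close> by (simp add: power2_eq_square algebra_simps)
    moreover have "a^2 \<le> \<pi>^2" using \<open>0 \<le> a\<close> \<open>a \<le> \<pi>\<close> by (simp add: power_mono)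
    ultimately have "n * (n - 2) * a^2 \<le> n^2 * \<pi>^2" using True \<open>0 \<le> n\<close> by (intro mult_mono) auto
    then show ?thesis by (simp add: power_mult_distrib)
  next
    case False
    then have "n * (n - 2) * a^2 \<le> 0" using \<open>0 \<le> n\<close> by (simp add: mult_nonneg_nonpos mult_nonpos_nonneg)
    then show ?thesis by (meson order_trans zero_le_power2)
  qed
  moreover have "central_moment4 (\<lambda>k. falling_fact n k * \<pi> ^ k) (n * \<pi>) = n * a + 3 * (n * (n - 2) * a^2)"
    unfolding central_moment4_def a_def
    by (simp add: numeral_eq_Suc algebra_simps power2_eq_square power3_eq_cube power4_eq_xxxx)
  ultimately show ?thesis by linarith
qed

lemma sum_measure_pmf_eq_expectation_card:
  assumes "finite S"
  shows "(\<Sum>x\<in>S. measure_pmf.prob M {\<omega>. P \<omega> x}) = measure_pmf.expectation M (\<lambda>\<omega>. real (card {x\<in>S. P \<omega> x}))"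
proof -
  have "real (card {x\<in>S. P \<omega> x}) = (\<Sum>x\<in>S. indicator {\<omega>. P \<omega> x} \<omega>)" for \<omega>
    using sum.inter_filter[OF assms, of "\<lambda>_. 1::real" "P \<omega>", symmetric]
    by (simp add: indicator_def of_bool_def)
  moreover have "integrable (measure_pmf M) (indicator A :: _ \<Rightarrow> real)" for A
    by (rule integrable_measure_pmf_bounded[where B = 1]) (simp add: indicator_def)
  ultimately show ?thesis by (simp add: Bochner_Integration.integral_sum)
qed

lemma geometric_half_sum_le: "(\<Sum>l<n. (1 / 2 :: real) ^ l) \<le> 2"
  by (simp add: geometric_sum)

locale five_independent_hashing =
  fixes H :: "(nat \<Rightarrow> nat) pmf" and u t :: nat and S :: "nat set" and q :: nat
  assumes indep: "five_independent H u t" and five_le_u: "5 \<le> u" and t_pos: "0 < t"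
    and S_subset: "S \<subseteq> {..<u}" and q_less: "q < u" and q_notin_S: "q \<notin> S"
begin

lemma finite_S: "finite S"
  using S_subset finite_subset by blast

text \<open>\<open>falling_fact X k\<close> counts the \<open>k\<close>-tuples of distinct keys hashing into \<open>B\<close>; by
  5-independence each such tuple, together with \<open>h q = p\<close>, has probability \<open>(|B| / t) ^ k / t\<close>.\<close>

lemma expectation_point_falling_fact:
  assumes "k \<le> 4" and "p < t"
  shows "measure_pmf.expectation H
      (\<lambda>h. indicator {h. h q = p} h * falling_fact (real (card {y\<in>S. h y \<in> B})) k)
     = falling_fact (real (card S)) k * (real (card (B \<inter> {..<t})) / real t) ^ k / real t"
proof -
  define E where "E xs = {h. h q = p \<and> (\<forall>x\<in>set xs. h x \<in> B)}" for xs
  have count: "indicator {h. h q = p} h * falling_fact (real (card {y\<in>S. h y \<in> B})) k =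
     (\<Sum>xs\<in>distinct_lists S k. indicator (E xs) h)" for h
  proof -
    have "distinct_lists {y\<in>S. h y \<in> B} k = {xs\<in>distinct_lists S k. \<forall>x\<in>set xs. h x \<in> B}"
      unfolding distinct_lists_def by auto
    then have "falling_fact (real (card {y\<in>S. h y \<in> B})) k
        = (\<Sum>xs\<in>distinct_lists S k. if \<forall>x\<in>set xs. h x \<in> B then 1 else 0)"
      using card_distinct_lists[of "{y\<in>S. h y \<in> B}" k] finite_S
        sum.inter_filter[OF finite_distinct_lists[OF finite_S, of k],
          of "\<lambda>_. 1::real" "\<lambda>xs. \<forall>x\<in>set xs. h x \<in> B"]
      by simp
    then show ?thesis by (cases "h q = p") (simp_all add: E_def indicator_def of_bool_def)
  qed
  have prob_E: "measure_pmf.prob H (E xs) = real (card (B \<inter> {..<t})) ^ k / real t ^ Suc k"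
    if "xs \<in> distinct_lists S k" for xs
    using that five_independent_prob_point_hits[OF indep five_le_u t_pos q_less, of xs p B]
      assms S_subset q_notin_S unfolding distinct_lists_def E_def by auto
  have "measure_pmf.expectation H
      (\<lambda>h. indicator {h. h q = p} h * falling_fact (real (card {y\<in>S. h y \<in> B})) k)
     = (\<Sum>xs\<in>distinct_lists S k. measure_pmf.prob H (E xs))"
    unfolding count
    by (subst Bochner_Integration.integral_sum)
       (auto intro: integrable_measure_pmf_bounded[where B = 1] simp: indicator_def)
  also have "\<dots> = real (card (distinct_lists S k)) * real (card (B \<inter> {..<t})) ^ k / real t ^ Suc k"
    using prob_E by simp
  finally show ?thesis
    using card_distinct_lists[OF finite_S, of k] t_pos by (simp add: power_divide)
qed

lemma point_central_moment4_le:
  fixes B :: "nat set"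
  assumes "p < t"
  defines "\<mu> \<equiv> real (card S) * (real (card (B \<inter> {..<t})) / real t)"
  shows "measure_pmf.expectation H
      (\<lambda>h. indicator {h. h q = p} h * (real (card {y\<in>S. h y \<in> B}) - \<mu>) ^ 4)
     \<le> (\<mu> + 3 * \<mu>^2) / real t"
proof -
  define \<pi> where "\<pi> = real (card (B \<inter> {..<t})) / real t"
  define X where "X h = real (card {y\<in>S. h y \<in> B})" for h
  define F where "F k = (\<lambda>h. indicator {h. h q = p} h * falling_fact (X h) k)" for k
  have "integrable (measure_pmf H) (F k)" for k
  proof (rule integrable_measure_pmf_bounded)
    fix h
    have "\<bar>X h\<bar> \<le> real (card S)" unfolding X_def using finite_S by (simp add: card_mono)
    then have "(\<bar>X h\<bar> + real k) ^ k \<le> (real (card S) + real k) ^ k" by (intro power_mono) auto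
    then show "\<bar>F k h\<bar> \<le> (real (card S) + real k) ^ k"
      using abs_falling_fact_le[of "X h" k] unfolding F_def by (auto simp: indicator_def)
  qed
  then have "measure_pmf.expectation H (\<lambda>h. indicator {h. h q = p} h * (X h - \<mu>) ^ 4)
      = central_moment4 (\<lambda>k. measure_pmf.expectation H (F k)) \<mu>"
    unfolding power4_eq_central_moment4 F_def
    by (simp add: expectation_central_moment4 flip: central_moment4_mult)
  also have "\<dots> = central_moment4 (\<lambda>k. 1 / real t * (falling_fact (real (card S)) k * \<pi> ^ k)) \<mu>"
    by (rule central_moment4_cong) (simp add: F_def X_def \<pi>_def expectation_point_falling_fact[OF _ assms(1)])
  also have "\<dots> = central_moment4 (\<lambda>k. falling_fact (real (card S)) k * \<pi> ^ k) \<mu> / real t"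
    by (simp only: central_moment4_mult) simp
  also have "\<dots> \<le> (\<mu> + 3 * \<mu>^2) / real t"
  proof (rule divide_right_mono)
    have "card (B \<inter> {..<t}) \<le> t" using card_mono[of "{..<t}" "B \<inter> {..<t}"] by simp
    then have "0 \<le> \<pi>" "\<pi> \<le> 1" unfolding \<pi>_def using t_pos by auto
    then show "central_moment4 (\<lambda>k. falling_fact (real (card S)) k * \<pi> ^ k) \<mu> \<le> \<mu> + 3 * \<mu>^2"
      unfolding \<mu>_def \<pi>_def[symmetric] by (intro binomial_central_moment4_le) auto
  qed simp
  finally show ?thesis unfolding X_def .
qed

lemma prob_point_deviation_le:
  fixes B :: "nat set" and d :: real
  assumes "p < t" and "0 < d"
  defines "\<mu> \<equiv> real (card S) * (real (card (B \<inter> {..<t})) / real t)"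
  shows "measure_pmf.prob H {h. h q = p \<and> d \<le> real (card {y\<in>S. h y \<in> B}) - \<mu>}
    \<le> (\<mu> + 3 * \<mu>^2) / (real t * d ^ 4)"
proof -
  define f where "f h = indicator {h. h q = p} h * (real (card {y\<in>S. h y \<in> B}) - \<mu>) ^ 4" for h
  have "{h. h q = p \<and> d \<le> real (card {y\<in>S. h y \<in> B}) - \<mu>} \<subseteq> {h \<in> space (measure_pmf H). d ^ 4 \<le> f h}"
  proof
    fix h assume "h \<in> {h. h q = p \<and> d \<le> real (card {y\<in>S. h y \<in> B}) - \<mu>}"
    then have "h q = p" "d ^ 4 \<le> (real (card {y\<in>S. h y \<in> B}) - \<mu>) ^ 4"
      using \<open>0 < d\<close> by (auto intro: power_mono)
    then show "h \<in> {h \<in> space (measure_pmf H). d ^ 4 \<le> f h}" unfolding f_def by simp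
  qed
  then have "measure_pmf.prob H {h. h q = p \<and> d \<le> real (card {y\<in>S. h y \<in> B}) - \<mu>}
      \<le> measure_pmf.prob H {h \<in> space (measure_pmf H). d ^ 4 \<le> f h}"
    by (rule measure_pmf.finite_measure_mono) simp
  also have "\<dots> \<le> measure_pmf.expectation H f / d ^ 4"
  proof (rule integral_Markov_inequality_measure[where A = UNIV])
    have "\<bar>f h\<bar> \<le> (real (card S) + \<mu>) ^ 4" for h
    proof -
      have "0 \<le> \<mu>" unfolding \<mu>_def by simp
      then have "\<bar>real (card {y\<in>S. h y \<in> B}) - \<mu>\<bar> \<le> real (card S) + \<mu>"
        using finite_S card_mono[of S "{y\<in>S. h y \<in> B}"] by auto
      then have "\<bar>real (card {y\<in>S. h y \<in> B}) - \<mu>\<bar> ^ 4 \<le> (real (card S) + \<mu>) ^ 4"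
        by (rule power_mono) simp
      then show ?thesis unfolding f_def by (auto simp: indicator_def power_abs)
    qed
    then show "integrable (measure_pmf H) f" by (rule integrable_measure_pmf_bounded)
  qed (use \<open>0 < d\<close> in \<open>auto simp: f_def\<close>)
  also have "\<dots> \<le> (\<mu> + 3 * \<mu>^2) / real t / d ^ 4"
    using point_central_moment4_le[OF \<open>p < t\<close>, of B] \<open>0 < d\<close>
    unfolding f_def \<mu>_def by (intro divide_right_mono) auto
  finally show ?thesis by (simp add: divide_divide_eq_left)
qed

text \<open>The expected load of a set \<open>B\<close> of at most \<open>m\<close> positions is at most \<open>2 m / 3\<close>, so a load of
  \<open>8 m / 9\<close> is a deviation of \<open>2 m / 9\<close>.\<close>

lemma prob_point_overloaded_le:
  fixes B :: "nat set" and m :: nat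
  assumes "p < t" and "0 < m" and "card (B \<inter> {..<t}) \<le> m" and load: "3 * card S \<le> 2 * t"
  shows "measure_pmf.prob H {h. h q = p \<and> 8 * m \<le> 9 * card {y\<in>S. h y \<in> B}}
    \<le> 1641 / (real t * real m ^ 2)"
proof -
  define \<mu> where "\<mu> = real (card S) * (real (card (B \<inter> {..<t})) / real t)"
  have "real (card S) * real (card (B \<inter> {..<t})) \<le> (2 * real t / 3) * real m"
    using load assms(3) by (intro mult_mono) auto
  then have "\<mu> \<le> 2 * real m / 3" unfolding \<mu>_def using t_pos by (simp add: field_simps)
  have "0 \<le> \<mu>" unfolding \<mu>_def by simp
  have "measure_pmf.prob H {h. h q = p \<and> 8 * m \<le> 9 * card {y\<in>S. h y \<in> B}}
      \<le> measure_pmf.prob H {h. h q = p \<and> 2 * real m / 9 \<le> real (card {y\<in>S. h y \<in> B}) - \<mu>}"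
    using \<open>\<mu> \<le> 2 * real m / 3\<close> by (intro measure_pmf.finite_measure_mono) auto
  also have "\<dots> \<le> (\<mu> + 3 * \<mu>^2) / (real t * (2 * real m / 9) ^ 4)"
    unfolding \<mu>_def by (rule prob_point_deviation_le) (use assms in auto)
  also have "\<dots> \<le> 4 * real m ^ 2 / (real t * (2 * real m / 9) ^ 4)"
  proof -
    have "\<mu>^2 \<le> real m ^ 2" using \<open>0 \<le> \<mu>\<close> \<open>\<mu> \<le> 2 * real m / 3\<close> by (intro power_mono) auto
    moreover have "real m \<le> real m ^ 2" using \<open>0 < m\<close> by (simp add: power2_eq_square)
    ultimately have "\<mu> + 3 * \<mu>^2 \<le> 4 * real m ^ 2" using \<open>\<mu> \<le> 2 * real m / 3\<close> by linarith
    then show ?thesis using t_pos assms(2) by (intro divide_right_mono) auto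
  qed
  also have "\<dots> \<le> 1641 / (real t * real m ^ 2)"
    using assms(2) t_pos by (simp add: field_simps)
  finally show ?thesis .
qed

lemma prob_point_dense_block_le:
  assumes "p < t" and "0 < m" and "3 * card S \<le> 2 * t"
  shows "measure_pmf.prob H {h. h q = p \<and> 8 * m \<le> 9 * card {y\<in>S. h y div m = j}}
    \<le> 1641 / (real t * real m ^ 2)"
proof -
  have "{y. y div m = j} \<inter> {..<t} \<subseteq> {j * m..<j * m + m}"
    using div_eq_imp_block_bounds[of _ m j] \<open>0 < m\<close> by auto
  then have "card ({y. y div m = j} \<inter> {..<t}) \<le> card {j * m..<j * m + m}"
    by (rule card_mono[rotated]) simp
  then show ?thesis
    using prob_point_overloaded_le[OF assms(1,2) _ assms(3), of "{y. y div m = j}"] by simp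
qed

lemma prob_dense_block_near_le:
  assumes load: "3 * card S \<le> 2 * t"
  shows "measure_pmf.prob H {h. dense_block_near h S q (2 ^ l)} \<le> 65 * 1641 / 4 ^ l"
proof -
  define m :: nat where "m = 2 ^ l"
  define E where "E p j = {h. h q = p \<and> 8 * m \<le> 9 * card {y\<in>S. h y div m = j}}" for p j
  define J where "J p = {p div m - 32 .. p div m + 32}" for p
  have "{h. dense_block_near h S q m} \<inter> set_pmf H \<subseteq> (\<Union>p<t. \<Union>j\<in>J p. E p j)"
  proof
    fix h assume h: "h \<in> {h. dense_block_near h S q m} \<inter> set_pmf H"
    then have "h q < t" using indep q_less unfolding five_independent_def by blast
    then show "h \<in> (\<Union>p<t. \<Union>j\<in>J p. E p j)" using h unfolding dense_block_near_def J_def E_def by auto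
  qed
  then have "measure_pmf.prob H ({h. dense_block_near h S q m} \<inter> set_pmf H)
      \<le> measure_pmf.prob H (\<Union>p<t. \<Union>j\<in>J p. E p j)"
    by (rule measure_pmf.finite_measure_mono) simp
  then have "measure_pmf.prob H {h. dense_block_near h S q m} \<le> measure_pmf.prob H (\<Union>p<t. \<Union>j\<in>J p. E p j)"
    by (simp add: measure_Int_set_pmf)
  also have "\<dots> \<le> (\<Sum>p<t. measure_pmf.prob H (\<Union>j\<in>J p. E p j))"
    by (rule measure_UNION_le) auto
  also have "\<dots> \<le> (\<Sum>p<t. \<Sum>j\<in>J p. measure_pmf.prob H (E p j))"
    by (intro sum_mono measure_UNION_le) (auto simp: J_def)
  also have "\<dots> \<le> (\<Sum>p<t. real (card (J p)) * (1641 / (real t * real m ^ 2)))"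
  proof (intro sum_mono sum_bounded_above)
    fix p j assume "p \<in> {..<t}"
    then show "measure_pmf.prob H (E p j) \<le> 1641 / (real t * real m ^ 2)"
      unfolding E_def m_def by (intro prob_point_dense_block_le[OF _ _ load]) auto
  qed
  also have "\<dots> \<le> (\<Sum>p<t. 65 * (1641 / (real t * real m ^ 2)))"
    by (intro sum_mono mult_right_mono) (auto simp: J_def)
  also have "\<dots> = 65 * 1641 / 4 ^ l"
    using t_pos unfolding m_def by (simp add: power2_eq_square power_mult_distrib[symmetric])
  finally show ?thesis unfolding m_def .
qed

lemma expectation_card_shares_full_interval_le:
  "measure_pmf.expectation H (\<lambda>h. real (card {x\<in>S. shares_full_interval h S q x}))
    \<le> 32 + (\<Sum>l<card S. 64 * 2 ^ l * measure_pmf.prob H {h. dense_block_near h S q (2 ^ l)})"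
proof -
  define G where "G l = {h. dense_block_near h S q (2 ^ l)}" for l
  define R where "R l = (\<lambda>h. 64 * 2 ^ l * indicator (G l) h :: real)" for l
  have integrable_R: "integrable (measure_pmf H) (R l)" for l
    by (rule integrable_measure_pmf_bounded[where B = "64 * 2 ^ l"]) (simp add: R_def indicator_def)
  have "measure_pmf.expectation H (\<lambda>h. real (card {x\<in>S. shares_full_interval h S q x}))
      \<le> measure_pmf.expectation H (\<lambda>h. 32 + (\<Sum>l<card S. R l h))"
  proof (rule integral_mono)
    show "integrable (measure_pmf H) (\<lambda>h. real (card {x\<in>S. shares_full_interval h S q x}))"
      by (rule integrable_measure_pmf_bounded[where B = "real (card S)"]) (simp add: card_mono finite_S)
    show "integrable (measure_pmf H) (\<lambda>h. 32 + (\<Sum>l<card S. R l h))"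
      by (intro Bochner_Integration.integrable_add Bochner_Integration.integrable_sum
          integrable_R measure_pmf.integrable_const)
    show "real (card {x\<in>S. shares_full_interval h S q x}) \<le> 32 + (\<Sum>l<card S. R l h)" for h
      using card_shares_full_interval_le[OF finite_S, of h q] by (simp add: R_def G_def indicator_def)
  qed
  also have "\<dots> = 32 + (\<Sum>l<card S. measure_pmf.expectation H (R l))"
    using integrable_R
    by (simp add: Bochner_Integration.integral_add Bochner_Integration.integrable_sum
        Bochner_Integration.integral_sum)
  finally show ?thesis by (simp add: R_def G_def)
qed

lemma sum_prob_shares_full_interval_le:
  assumes load: "3 * card S \<le> 2 * t"
  shows "(\<Sum>x\<in>S. measure_pmf.prob H {h. shares_full_interval h S q x}) \<le> 13653152"
proof -
  have "(\<Sum>x\<in>S. measure_pmf.prob H {h. shares_full_interval h S q x})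
      \<le> 32 + (\<Sum>l<card S. 64 * 2 ^ l * measure_pmf.prob H {h. dense_block_near h S q (2 ^ l)})"
    using sum_measure_pmf_eq_expectation_card[OF finite_S, of H "\<lambda>h x. shares_full_interval h S q x"]
      expectation_card_shares_full_interval_le by simp
  also have "\<dots> \<le> 32 + (\<Sum>l<card S. 64 * 2 ^ l * (65 * 1641 / 4 ^ l))"
    by (intro add_left_mono sum_mono mult_left_mono prob_dense_block_near_le[OF load]) simp
  also have "\<dots> = 32 + 6826560 * (\<Sum>l<card S. (1 / 2 :: real) ^ l)"
  proof -
    have "64 * 2 ^ l * (65 * 1641 / 4 ^ l) = 6826560 * (1 / 2 :: real) ^ l" for l
      by (simp add: power_divide field_simps flip: power_mult_distrib)
    then show ?thesis by (simp add: sum_distrib_left)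
  qed
  also have "\<dots> \<le> 13653152" using geometric_half_sum_le[of "card S"] by simp
  finally show ?thesis .
qed

end

text \<open>For \<open>u < 5\<close> the independence hypothesis is vacuous, but then \<open>S\<close> has at most four keys.\<close>

lemma five_independent_sum_prob_shares_full_interval_le:
  assumes "five_independent H u t" and "0 < t" and "S \<subseteq> {..<u}" and "q < u" and "q \<notin> S"
    and "3 * card S \<le> 2 * t"
  shows "(\<Sum>x\<in>S. measure_pmf.prob H {h. shares_full_interval h S q x}) \<le> 13653152"
proof (cases "5 \<le> u")
  case True
  then interpret five_independent_hashing H u t S q
    using assms by unfold_locales
  show ?thesis by (rule sum_prob_shares_full_interval_le[OF assms(6)])
next
  case False
  have "S \<subseteq> {..<u} - {q}" using assms(3,5) by auto
  then have "card S \<le> u - 1" using assms(4) card_mono[of "{..<u} - {q}" S] by simp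
  then have "(\<Sum>x\<in>S. measure_pmf.prob H {h. shares_full_interval h S q x}) \<le> 4"
    using False sum_bounded_above[of S "\<lambda>x. measure_pmf.prob H {h. shares_full_interval h S q x}" 1]
    by simp
  then show ?thesis by simp
qed

lemma prob_lp_query_le:
  assumes "distinct xs" and "universal_sig \<Sigma> u b" and "set xs \<subseteq> {..<u}" and "q < u" and "q \<notin> set xs"
  shows "measure_pmf.prob (pair_pmf H \<Sigma>) {(h, s). lp_query h s (lp_build h s xs) q}
    \<le> (\<Sum>x\<in>set xs. measure_pmf.prob H {h. shares_full_interval h (set xs) q x}) / 2 ^ b"
proof -
  define A where "A x = {h. shares_full_interval h (set xs) q x}" for x
  define C where "C x = {s :: nat \<Rightarrow> nat. s x = s q}" for x
  have "{(h, s). lp_query h s (lp_build h s xs) q} \<subseteq> (\<Union>x\<in>set xs. A x \<times> C x)"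
  proof clarify
    fix h s assume "lp_query h s (lp_build h s xs) q"
    then obtain x where "x \<in> set xs" "s x = s q" "shares_full_interval h (set xs) q x"
      using lp_query_lp_build_imp_shares_full_interval[OF assms(1)] by blast
    then show "(h, s) \<in> (\<Union>x\<in>set xs. A x \<times> C x)" unfolding A_def C_def by blast
  qed
  then have "measure_pmf.prob (pair_pmf H \<Sigma>) {(h, s). lp_query h s (lp_build h s xs) q}
      \<le> measure_pmf.prob (pair_pmf H \<Sigma>) (\<Union>x\<in>set xs. A x \<times> C x)"
    by (rule measure_pmf.finite_measure_mono) simp
  also have "\<dots> \<le> (\<Sum>x\<in>set xs. measure_pmf.prob H (A x) * measure_pmf.prob \<Sigma> (C x))"
    by (rule order_trans[OF measure_UNION_le]) (auto simp: measure_pair_pmf_Times)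
  also have "\<dots> \<le> (\<Sum>x\<in>set xs. measure_pmf.prob H (A x) * (1 / 2 ^ b))"
  proof (intro sum_mono mult_left_mono)
    fix x assume "x \<in> set xs"
    then have "x < u" "x \<noteq> q" using assms(3,5) by auto
    then show "measure_pmf.prob \<Sigma> (C x) \<le> 1 / 2 ^ b"
      using assms(2,4) unfolding universal_sig_def C_def by blast
  qed simp
  finally show ?thesis by (simp add: A_def sum_divide_distrib)
qed

theorem theorem9:
  shows "\<exists>C::real. \<forall>(u::nat) (t::nat) (b::nat) (xs::nat list) (q::nat)
            (H::(nat \<Rightarrow> nat) pmf) (\<Sigma>::(nat \<Rightarrow> nat) pmf).
     (\<exists>k. t = 2 ^ k) \<longrightarrow>
     distinct xs \<longrightarrow> set xs \<subseteq> {..<u} \<longrightarrow>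
     3 * length xs \<le> 2 * t \<longrightarrow>
     five_independent H u t \<longrightarrow>
     universal_sig \<Sigma> u b \<longrightarrow>
     q < u \<longrightarrow> q \<notin> set xs \<longrightarrow>
     measure_pmf.prob (pair_pmf H \<Sigma>)
        {(h, s). lp_query h s (lp_build h s xs) q} \<le> C / 2 ^ b"
proof (intro exI[of _ 13653152] allI impI)
  fix u t b xs q H \<Sigma>
  assume "\<exists>k. t = 2 ^ k" and "distinct xs" and "set xs \<subseteq> {..<u}" and "3 * length xs \<le> 2 * t"
    and "five_independent H u t" and "universal_sig \<Sigma> u b" and "q < u" and "q \<notin> set xs"
  moreover have "0 < t" and "card (set xs) = length xs"
    using \<open>\<exists>k. t = 2 ^ k\<close> \<open>distinct xs\<close> by (auto simp: distinct_card)
  ultimately have "(\<Sum>x\<in>set xs. measure_pmf.prob H {h. shares_full_interval h (set xs) q x}) \<le> 13653152"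
    by (intro five_independent_sum_prob_shares_full_interval_le) simp_all
  then have "(\<Sum>x\<in>set xs. measure_pmf.prob H {h. shares_full_interval h (set xs) q x}) / 2 ^ b
      \<le> 13653152 / 2 ^ b"
    by (rule divide_right_mono) simp
  with prob_lp_query_le[of xs \<Sigma> u b q H] \<open>distinct xs\<close> \<open>universal_sig \<Sigma> u b\<close> \<open>set xs \<subseteq> {..<u}\<close>
    \<open>q < u\<close> \<open>q \<notin> set xs\<close>
  show "measure_pmf.prob (pair_pmf H \<Sigma>) {(h, s). lp_query h s (lp_build h s xs) q} \<le> 13653152 / 2 ^ b"
    by linarith
qed

end
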